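(* Let $A$ with projections $\pi_B:A\to B$, $\pi_C:A\to C$ be a pullback in $\mathbf{Sets}$ of $f_1:B\to D$ and $g_1:C\to D$, where $g_1$ is injective. Then $\mathcal{PP}_a(A)$ with $\mathcal{PP}_a(\pi_B),\mathcal{PP}_a(\pi_C)$ is a pullback of $\mathcal{PP}_a(f_1)$ and $\mathcal{PP}_a(g_1)$ in $\mathbf{Sets}$.
   Context: For a set $M$ whose elements are treated as atoms (urelements, distinct from every set built below), let $S_0=M$, $S_{n+1}=S_n\cup\mathcal{P}(S_n)$, and $\mathcal{PP}_a(M)=\bigcup_{n\ge 0}S_n$. For $f:M\to N$, $\mathcal{PP}_a(f)$ is defined recursively by $\mathcal{PP}_a(f)(x)=f(x)$ for $x\in M$ and $\mathcal{PP}_a(f)(x)=\{\mathcal{PP}_a(f)(x')\mid x'\in x\}$ otherwise; this makes $\mathcal{PP}_a$ a functor $\mathbf{Sets}\to\mathbf{Sets}$. *)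

theory Defs
  imports Main
begin

text \<open>
  A HOL type cannot contain PP_a(M) for infinite M (its cardinality is beth_omega(|M|)).
  We therefore work inside an arbitrary universe type 'u equipped with a set-former
  mk :: 'u set => 'u; atoms are elements of 'u.  The hypothesis urelem_encoding mk M
  says that mk is injective on the subsets of PP_a(M) and that built sets are distinct
  from the atoms of M, so that the encoded PP_a(M) is an exact copy of the paper's one.
\<close>

primrec lev :: "('u set \<Rightarrow> 'u) \<Rightarrow> 'u set \<Rightarrow> nat \<Rightarrow> 'u set" where
  "lev mk M 0 = M"
| "lev mk M (Suc n) = lev mk M n \<union> mk ` Pow (lev mk M n)"

definition PPa :: "('u set \<Rightarrow> 'u) \<Rightarrow> 'u set \<Rightarrow> 'u set" where
  "PPa mk M = (\<Union>n. lev mk M n)"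

definition urelem_encoding :: "('u set \<Rightarrow> 'u) \<Rightarrow> 'u set \<Rightarrow> bool" where
  "urelem_encoding mk M \<longleftrightarrow>
     inj_on mk (Pow (PPa mk M)) \<and> M \<inter> mk ` Pow (PPa mk M) = {}"

primrec PPmap_lev :: "('u set \<Rightarrow> 'u) \<Rightarrow> 'u set \<Rightarrow> ('u \<Rightarrow> 'u) \<Rightarrow> nat \<Rightarrow> 'u \<Rightarrow> 'u" where
  "PPmap_lev mk M f 0 y = f y"
| "PPmap_lev mk M f (Suc n) y =
     (if y \<in> lev mk M n then PPmap_lev mk M f n y
      else mk (PPmap_lev mk M f n ` inv_into (Pow (lev mk M n)) mk y))"

definition PPmap :: "('u set \<Rightarrow> 'u) \<Rightarrow> 'u set \<Rightarrow> ('u \<Rightarrow> 'u) \<Rightarrow> 'u \<Rightarrow> 'u" where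
  "PPmap mk M f y = PPmap_lev mk M f (LEAST n. y \<in> lev mk M n) y"

definition is_pullback ::
  "'a set \<Rightarrow> ('a \<Rightarrow> 'b) \<Rightarrow> ('a \<Rightarrow> 'c) \<Rightarrow> 'b set \<Rightarrow> 'c set \<Rightarrow> 'd set
     \<Rightarrow> ('b \<Rightarrow> 'd) \<Rightarrow> ('c \<Rightarrow> 'd) \<Rightarrow> bool" where
  "is_pullback A pB pC B C D f g \<longleftrightarrow>
     (\<forall>a\<in>A. pB a \<in> B) \<and> (\<forall>a\<in>A. pC a \<in> C) \<and>
     (\<forall>b\<in>B. f b \<in> D) \<and> (\<forall>c\<in>C. g c \<in> D) \<and>
     (\<forall>a\<in>A. f (pB a) = g (pC a)) \<and>
     (\<forall>b\<in>B. \<forall>c\<in>C. f b = g c \<longrightarrow> (\<exists>!a. a \<in> A \<and> pB a = b \<and> pC a = c))"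

end

theory Submission
  imports Defs
begin

text \<open>
  Pulling back along an injection g1 makes the projection pB injective, and PP_a preserves
  injective maps; so PP_a(pB) is injective, which gives uniqueness of mediating elements.
  Existence does not need injectivity: given y in PP_a(B) and z in PP_a(C) with the same image
  in PP_a(D), either both are atoms, handled by the pullback A, or y = {y_i} and z = {z_j} are
  built sets with matching images, and by induction on the rank of y the set of all mediating
  elements of pairs (y_i, z_j) with equal images is a preimage of the pair (y, z).
\<close>

lemma image_eq_image_imp_eq:
  assumes "h ` S = h ` T" "T \<subseteq> U" "\<And>s t. s \<in> S \<Longrightarrow> t \<in> U \<Longrightarrow> h s = h t \<Longrightarrow> s = t"
  shows "S = T"
proof
  show "S \<subseteq> T"
  proof
    fix s assume s: "s \<in> S"
    then obtain t where "t \<in> T" "h s = h t" using assms(1) by blast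
    then show "s \<in> T" using assms(2,3) s by blast
  qed
  show "T \<subseteq> S"
  proof
    fix t assume t: "t \<in> T"
    then obtain s where "s \<in> S" "h s = h t" using assms(1) by (metis imageE imageI)
    then show "t \<in> S" using assms(2,3) t by blast
  qed
qed

text \<open>The covariant powerset functor preserves weak pullbacks.\<close>

lemma image_mediators_eq:
  assumes "F ` S = G ` T"
    and "\<forall>s\<in>S. \<forall>t\<in>T. F s = G t \<longrightarrow> (\<exists>x\<in>P. p x = s \<and> q x = t)"
  shows "p ` {x\<in>P. p x \<in> S \<and> q x \<in> T} = S" and "q ` {x\<in>P. p x \<in> S \<and> q x \<in> T} = T"
proof -
  show "p ` {x\<in>P. p x \<in> S \<and> q x \<in> T} = S"
  proof
    show "S \<subseteq> p ` {x\<in>P. p x \<in> S \<and> q x \<in> T}"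
    proof
      fix s assume s: "s \<in> S"
      then obtain t where "t \<in> T" "F s = G t" using assms(1) by (metis imageE imageI)
      with s show "s \<in> p ` {x\<in>P. p x \<in> S \<and> q x \<in> T}" using assms(2) by force
    qed
  qed auto
  show "q ` {x\<in>P. p x \<in> S \<and> q x \<in> T} = T"
  proof
    show "T \<subseteq> q ` {x\<in>P. p x \<in> S \<and> q x \<in> T}"
    proof
      fix t assume t: "t \<in> T"
      then obtain s where "s \<in> S" "F s = G t" using assms(1) by (metis imageE imageI)
      with t show "t \<in> q ` {x\<in>P. p x \<in> S \<and> q x \<in> T}" using assms(2) by force
    qed
  qed auto
qed

subsection \<open>The levels of PP_a\<close>

lemma lev_mono: "m \<le> n \<Longrightarrow> lev mk M m \<subseteq> lev mk M n"
  by (induction rule: dec_induct) auto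

lemma lev_subset_PPa: "lev mk M n \<subseteq> PPa mk M"
  unfolding PPa_def by blast

lemma PPa_lev:
  assumes "x \<in> PPa mk M"
  obtains n where "x \<in> lev mk M n"
  using assms by (auto simp: PPa_def)

lemma mk_in_PPa: "S \<subseteq> lev mk M n \<Longrightarrow> mk S \<in> PPa mk M"
  using lev_subset_PPa[of mk M "Suc n"] by auto

lemma lev_Suc_cases: "x \<in> lev mk M (Suc n) \<Longrightarrow> x \<in> M \<or> (\<exists>S. S \<subseteq> lev mk M n \<and> x = mk S)"
proof (induction n arbitrary: x)
  case (Suc n)
  then show ?case using lev_mono[of n "Suc n" mk M] by auto
qed auto

lemma PPa_cases [consumes 1, case_names atom set]:
  assumes "x \<in> PPa mk M"
  obtains "x \<in> M" | n S where "S \<subseteq> lev mk M n" "x = mk S"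
proof -
  obtain n where n: "x \<in> lev mk M n" using assms by (rule PPa_lev)
  show thesis
  proof (cases n)
    case 0 then show ?thesis using n that(1) by simp
  next
    case (Suc m) then show ?thesis using n lev_Suc_cases[of x mk M m] that by blast
  qed
qed

lemma PPa_induct [consumes 1, case_names atom set]:
  assumes "x \<in> PPa mk M"
    and "\<And>x. x \<in> M \<Longrightarrow> P x"
    and "\<And>S n. S \<subseteq> lev mk M n \<Longrightarrow> (\<And>s. s \<in> S \<Longrightarrow> P s) \<Longrightarrow> P (mk S)"
  shows "P x"
proof -
  have "\<forall>x\<in>lev mk M n. P x" for n
  proof (induction n)
    case 0 show ?case using assms(2) by simp
  next
    case (Suc n)
    show ?case
    proof
      fix x assume "x \<in> lev mk M (Suc n)"
      then have "x \<in> M \<or> (\<exists>S. S \<subseteq> lev mk M n \<and> x = mk S)" by (rule lev_Suc_cases)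
      then show "P x" using assms(2,3) Suc.IH by blast
    qed
  qed
  moreover obtain n where "x \<in> lev mk M n" using assms(1) by (rule PPa_lev)
  ultimately show ?thesis by blast
qed

lemma mk_notin_atoms: "urelem_encoding mk M \<Longrightarrow> S \<subseteq> lev mk M n \<Longrightarrow> mk S \<notin> M"
  using lev_subset_PPa[of mk M n] unfolding urelem_encoding_def by blast

lemma mk_eq_mk_iff:
  "urelem_encoding mk M \<Longrightarrow> S \<subseteq> PPa mk M \<Longrightarrow> T \<subseteq> PPa mk M \<Longrightarrow> mk S = mk T \<longleftrightarrow> S = T"
  by (auto simp: urelem_encoding_def inj_on_def)

subsection \<open>The action of PP_a on maps\<close>

lemma PPmap_lev_stable:
  assumes "y \<in> lev mk M n" "n \<le> m"
  shows "PPmap_lev mk M f m y = PPmap_lev mk M f n y"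
  using assms(2)
proof (induction m rule: dec_induct)
  case (step k)
  then have "y \<in> lev mk M k" using lev_mono[of n k mk M] assms(1) by auto
  then show ?case using step by simp
qed simp

lemma PPmap_eq_PPmap_lev: "y \<in> lev mk M n \<Longrightarrow> PPmap mk M f y = PPmap_lev mk M f n y"
  unfolding PPmap_def by (metis LeastI Least_le PPmap_lev_stable)

lemma PPmap_atom: "y \<in> M \<Longrightarrow> PPmap mk M f y = f y"
  using PPmap_eq_PPmap_lev[of y mk M 0] by simp

lemma PPmap_mk:
  assumes enc: "urelem_encoding mk M" and S: "S \<subseteq> lev mk M n"
  shows "PPmap mk M f (mk S) = mk (PPmap mk M f ` S)"
proof -
  define k where "k = (LEAST j. mk S \<in> lev mk M j)"
  have "mk S \<in> lev mk M (Suc n)" using S by simp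
  then have k: "mk S \<in> lev mk M k" unfolding k_def by (rule LeastI)
  have "k \<noteq> 0" using k mk_notin_atoms[OF enc S] by (cases k) auto
  then obtain j where kj: "k = Suc j" by (cases k) auto
  have j: "mk S \<notin> lev mk M j"
  proof
    assume "mk S \<in> lev mk M j"
    then have "k \<le> j" unfolding k_def by (rule Least_le)
    with kj show False by simp
  qed
  from k kj j obtain T where T: "T \<subseteq> lev mk M j" "mk S = mk T" by auto
  have "S \<subseteq> PPa mk M" "T \<subseteq> PPa mk M"
    using S T(1) lev_subset_PPa[of mk M] by blast+
  then have ST: "S = T" using mk_eq_mk_iff[OF enc] T(2) by blast
  have "Pow (lev mk M j) \<subseteq> Pow (PPa mk M)" using lev_subset_PPa[of mk M j] by (rule Pow_mono)
  then have inj: "inj_on mk (Pow (lev mk M j))"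
    using enc inj_on_subset unfolding urelem_encoding_def by blast
  have "PPmap mk M f (mk S) = PPmap_lev mk M f k (mk S)" by (rule PPmap_eq_PPmap_lev[OF k])
  also have "\<dots> = mk (PPmap_lev mk M f j ` S)"
    using kj j inv_into_f_f[OF inj, of S] T ST by simp
  also have "PPmap_lev mk M f j ` S = PPmap mk M f ` S"
  proof (rule image_cong)
    fix x assume "x \<in> S"
    then have "x \<in> lev mk M j" using T ST by blast
    then show "PPmap_lev mk M f j x = PPmap mk M f x" by (rule PPmap_eq_PPmap_lev[symmetric])
  qed simp
  finally show ?thesis .
qed

lemma PPmap_lev_into:
  assumes enc: "urelem_encoding mk M" and f: "f ` M \<subseteq> N"
  shows "x \<in> lev mk M n \<Longrightarrow> PPmap mk M f x \<in> lev mk N n"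
proof (induction n arbitrary: x)
  case 0 then show ?case using f by (auto simp: PPmap_atom)
next
  case (Suc n)
  from lev_Suc_cases[OF Suc.prems] show ?case
  proof
    assume "x \<in> M"
    then show ?case using f lev_mono[of 0 "Suc n" mk N] by (auto simp: PPmap_atom)
  next
    assume "\<exists>S. S \<subseteq> lev mk M n \<and> x = mk S"
    then obtain S where S: "S \<subseteq> lev mk M n" "x = mk S" by blast
    then have "PPmap mk M f ` S \<subseteq> lev mk N n" using Suc.IH by blast
    then show ?case using PPmap_mk[OF enc S(1)] S(2) by simp
  qed
qed

lemma PPmap_into_PPa:
  assumes "urelem_encoding mk M" "f ` M \<subseteq> N" "x \<in> PPa mk M"
  shows "PPmap mk M f x \<in> PPa mk N"
proof -
  obtain n where "x \<in> lev mk M n" using assms(3) by (rule PPa_lev)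
  then have "PPmap mk M f x \<in> lev mk N n" by (rule PPmap_lev_into[OF assms(1,2)])
  then show ?thesis using lev_subset_PPa[of mk N n] by blast
qed

lemma PPmap_in_atoms_iff:
  assumes encM: "urelem_encoding mk M" and encN: "urelem_encoding mk N" and f: "f ` M \<subseteq> N"
    and x: "x \<in> PPa mk M"
  shows "PPmap mk M f x \<in> N \<longleftrightarrow> x \<in> M"
  using x
proof (cases rule: PPa_cases)
  case (set n S)
  then have "PPmap mk M f ` S \<subseteq> lev mk N n" using PPmap_lev_into[OF encM f] by blast
  then have "PPmap mk M f x \<notin> N" using mk_notin_atoms[OF encN] PPmap_mk[OF encM set(1)] set(2) by simp
  moreover have "x \<notin> M" using mk_notin_atoms[OF encM set(1)] set(2) by simp
  ultimately show ?thesis by simp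
qed (use f in \<open>auto simp: PPmap_atom\<close>)

lemma PPmap_mk_eq_PPmap_mk_iff:
  assumes encM: "urelem_encoding mk M" and encM': "urelem_encoding mk M'"
    and encN: "urelem_encoding mk N" and f: "f ` M \<subseteq> N" and g: "g ` M' \<subseteq> N"
    and S: "S \<subseteq> lev mk M n" and T: "T \<subseteq> lev mk M' m"
  shows "PPmap mk M f (mk S) = PPmap mk M' g (mk T) \<longleftrightarrow> PPmap mk M f ` S = PPmap mk M' g ` T"
proof -
  have "PPmap mk M f ` S \<subseteq> lev mk N n" using PPmap_lev_into[OF encM f] S by blast
  moreover have "PPmap mk M' g ` T \<subseteq> lev mk N m" using PPmap_lev_into[OF encM' g] T by blast
  ultimately have "PPmap mk M f ` S \<subseteq> PPa mk N" "PPmap mk M' g ` T \<subseteq> PPa mk N"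
    using lev_subset_PPa[of mk N] by blast+
  then show ?thesis
    unfolding PPmap_mk[OF encM S] PPmap_mk[OF encM' T] by (rule mk_eq_mk_iff[OF encN])
qed

lemma PPmap_lev_reflect:
  assumes encM: "urelem_encoding mk M" and encN: "urelem_encoding mk N" and f: "f ` M \<subseteq> N"
    and x: "x \<in> PPa mk M" and fx: "PPmap mk M f x \<in> lev mk N n"
  shows "x \<in> lev mk M n"
  using x fx
proof (induction x arbitrary: n rule: PPa_induct)
  case (atom x)
  then show ?case using lev_mono[of 0 n mk M] by auto
next
  case (set S k n)
  have img: "PPmap mk M f ` S \<subseteq> lev mk N k" using PPmap_lev_into[OF encM f] set.hyps by blast
  have fS: "PPmap mk M f (mk S) = mk (PPmap mk M f ` S)" by (rule PPmap_mk[OF encM set.hyps])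
  have notN: "mk (PPmap mk M f ` S) \<notin> N" by (rule mk_notin_atoms[OF encN img])
  have fS_lev: "mk (PPmap mk M f ` S) \<in> lev mk N n" using set.prems fS by simp
  obtain m where n: "n = Suc m"
  proof (cases n)
    case 0 then show ?thesis using fS_lev notN by simp
  qed
  then obtain U where U: "U \<subseteq> lev mk N m" "mk (PPmap mk M f ` S) = mk U"
    using lev_Suc_cases[of "mk (PPmap mk M f ` S)" mk N m] fS_lev notN by blast
  have "PPmap mk M f ` S \<subseteq> PPa mk N" "U \<subseteq> PPa mk N"
    using img U(1) lev_subset_PPa[of mk N] by blast+
  then have "PPmap mk M f ` S = U" using mk_eq_mk_iff[OF encN] U(2) by blast
  then have "S \<subseteq> lev mk M m" using set.IH U(1) by blast
  then show ?case using n by simp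
qed

lemma PPmap_cong:
  assumes "urelem_encoding mk M" "\<forall>x\<in>M. f x = g x" "x \<in> PPa mk M"
  shows "PPmap mk M f x = PPmap mk M g x"
  using assms(3) by (induction rule: PPa_induct) (use assms in \<open>simp_all add: PPmap_atom PPmap_mk\<close>)

lemma PPmap_comp:
  assumes encM: "urelem_encoding mk M" and encN: "urelem_encoding mk N" and f: "f ` M \<subseteq> N"
    and x: "x \<in> PPa mk M"
  shows "PPmap mk N g (PPmap mk M f x) = PPmap mk M (g \<circ> f) x"
  using x
proof (induction rule: PPa_induct)
  case (atom x)
  then show ?case using f by (auto simp: PPmap_atom)
next
  case (set S n)
  then have "PPmap mk M f ` S \<subseteq> lev mk N n" using PPmap_lev_into[OF encM f] by blast
  then show ?case using set PPmap_mk[OF encM set.hyps] PPmap_mk[OF encN] by (simp add: image_image)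
qed

lemma inj_on_PPmap:
  assumes encM: "urelem_encoding mk M" and encN: "urelem_encoding mk N" and g: "g ` M \<subseteq> N"
    and inj: "inj_on g M"
  shows "inj_on (PPmap mk M g) (PPa mk M)"
proof -
  let ?G = "PPmap mk M g"
  have "\<forall>y\<in>PPa mk M. ?G x = ?G y \<longrightarrow> x = y" if "x \<in> PPa mk M" for x
    using that
  proof (induction rule: PPa_induct)
    case (atom x)
    show ?case
    proof (intro ballI impI)
      fix y assume y: "y \<in> PPa mk M" and eq: "?G x = ?G y"
      have "?G y \<in> N" using eq atom g by (auto simp: PPmap_atom)
      then have "y \<in> M" using PPmap_in_atoms_iff[OF encM encN g y] by simp
      then show "x = y" using eq atom inj by (simp add: PPmap_atom inj_on_eq_iff)
    qed
  next
    case (set S n)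
    show ?case
    proof (intro ballI impI)
      fix y assume y: "y \<in> PPa mk M" and eq: "?G (mk S) = ?G y"
      have "mk S \<notin> M" by (rule mk_notin_atoms[OF encM set.hyps])
      then have "?G (mk S) \<notin> N" using PPmap_in_atoms_iff[OF encM encN g mk_in_PPa[OF set.hyps]] by simp
      then have "y \<notin> M" using eq g by (auto simp: PPmap_atom)
      with y obtain m T where T: "T \<subseteq> lev mk M m" "y = mk T" by (cases rule: PPa_cases) auto
      then have im: "?G ` S = ?G ` T"
        using eq PPmap_mk_eq_PPmap_mk_iff[OF encM encM encN g g set.hyps] by blast
      have T_PPa: "T \<subseteq> PPa mk M" using T lev_subset_PPa[of mk M] by blast
      have "S = T" by (rule image_eq_image_imp_eq[OF im T_PPa]) (use set.IH in blast)
      then show "mk S = y" using T by simp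
    qed
  qed
  then show ?thesis unfolding inj_on_def by blast
qed

subsection \<open>Pullbacks\<close>

lemma PPmap_commutes:
  assumes encA: "urelem_encoding mk A" and encB: "urelem_encoding mk B"
    and encC: "urelem_encoding mk C" and pB: "pB ` A \<subseteq> B" and pC: "pC ` A \<subseteq> C"
    and comm: "\<And>a. a \<in> A \<Longrightarrow> f (pB a) = g (pC a)" and x: "x \<in> PPa mk A"
  shows "PPmap mk B f (PPmap mk A pB x) = PPmap mk C g (PPmap mk A pC x)"
proof -
  have "PPmap mk B f (PPmap mk A pB x) = PPmap mk A (f \<circ> pB) x"
    by (rule PPmap_comp[OF encA encB pB x])
  also have "\<dots> = PPmap mk A (g \<circ> pC) x" using PPmap_cong[OF encA _ x] comm by simp
  also have "\<dots> = PPmap mk C g (PPmap mk A pC x)"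
    by (rule PPmap_comp[OF encA encC pC x, symmetric])
  finally show ?thesis .
qed

lemma pullback_inj_on_fst_proj:
  assumes "is_pullback A pB pC B C D f g" "inj_on g C"
  shows "inj_on pB A"
proof (rule inj_onI)
  fix a a' assume a: "a \<in> A" "a' \<in> A" "pB a = pB a'"
  have "g (pC a) = g (pC a')" using assms(1) a unfolding is_pullback_def by metis
  then have "pC a = pC a'" using assms a unfolding is_pullback_def by (meson inj_onD)
  then show "a = a'" using assms(1) a unfolding is_pullback_def by metis
qed

lemma PPmap_weak_pullback:
  assumes encA: "urelem_encoding mk A" and encB: "urelem_encoding mk B"
    and encC: "urelem_encoding mk C" and encD: "urelem_encoding mk D"
    and pB: "pB ` A \<subseteq> B" and f: "f ` B \<subseteq> D" and g: "g ` C \<subseteq> D"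
    and mediate: "\<And>b c. b \<in> B \<Longrightarrow> c \<in> C \<Longrightarrow> f b = g c \<Longrightarrow> \<exists>a\<in>A. pB a = b \<and> pC a = c"
    and y: "y \<in> PPa mk B" and z: "z \<in> PPa mk C"
    and eq: "PPmap mk B f y = PPmap mk C g z"
  shows "\<exists>x\<in>PPa mk A. PPmap mk A pB x = y \<and> PPmap mk A pC x = z"
  using y z eq
proof (induction y arbitrary: z rule: PPa_induct)
  case (atom b)
  then have "PPmap mk C g z \<in> D" using f by (auto simp: PPmap_atom)
  then have "z \<in> C" using PPmap_in_atoms_iff[OF encC encD g atom(2)] by simp
  then obtain a where "a \<in> A" "pB a = b" "pC a = z"
    using atom mediate by (auto simp: PPmap_atom)
  moreover have "a \<in> PPa mk A" using \<open>a \<in> A\<close> lev_subset_PPa[of mk A 0] by auto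
  ultimately show ?case by (metis PPmap_atom)
next
  case (set S n z)
  let ?PB = "PPmap mk A pB" and ?PC = "PPmap mk A pC" and ?F = "PPmap mk B f" and ?G = "PPmap mk C g"
  have "mk S \<notin> B" by (rule mk_notin_atoms[OF encB set.hyps])
  then have "?F (mk S) \<notin> D" using PPmap_in_atoms_iff[OF encB encD f mk_in_PPa[OF set.hyps]] by simp
  then have "z \<notin> C" using set.prems g by (auto simp: PPmap_atom)
  with set.prems(1) obtain m T where T: "T \<subseteq> lev mk C m" "z = mk T"
    by (cases rule: PPa_cases) auto
  then have im: "?F ` S = ?G ` T"
    using set.prems(2) PPmap_mk_eq_PPmap_mk_iff[OF encB encC encD f g set.hyps] by blast
  have T_PPa: "T \<subseteq> PPa mk C" using T lev_subset_PPa[of mk C] by blast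
  define X where "X = {x \<in> PPa mk A. ?PB x \<in> S \<and> ?PC x \<in> T}"
  have mediators: "\<forall>s\<in>S. \<forall>t\<in>T. ?F s = ?G t \<longrightarrow> (\<exists>x\<in>PPa mk A. ?PB x = s \<and> ?PC x = t)"
    using set.IH T_PPa by blast
  have "?PB ` X = S" "?PC ` X = T"
    using image_mediators_eq[OF im mediators] unfolding X_def .
  moreover have X: "X \<subseteq> lev mk A n"
    using PPmap_lev_reflect[OF encA encB pB] set.hyps unfolding X_def by blast
  ultimately have "?PB (mk X) = mk S" "?PC (mk X) = z"
    using PPmap_mk[OF encA X] T(2) by simp_all
  then show ?case using mk_in_PPa[OF X] by blast
qed

theorem mainTheorem4:
  fixes mk :: "'u set \<Rightarrow> 'u"
    and A B C D :: "'u set"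
    and pB pC f1 g1 :: "'u \<Rightarrow> 'u"
  assumes "urelem_encoding mk A" and "urelem_encoding mk B"
    and "urelem_encoding mk C" and "urelem_encoding mk D"
    and "is_pullback A pB pC B C D f1 g1"
    and "inj_on g1 C"
  shows "is_pullback (PPa mk A) (PPmap mk A pB) (PPmap mk A pC)
           (PPa mk B) (PPa mk C) (PPa mk D) (PPmap mk B f1) (PPmap mk C g1)"
proof -
  note enc = assms(1-4)
  have maps: "pB ` A \<subseteq> B" "pC ` A \<subseteq> C" "f1 ` B \<subseteq> D" "g1 ` C \<subseteq> D"
    and comm: "\<And>a. a \<in> A \<Longrightarrow> f1 (pB a) = g1 (pC a)"
    and mediate: "\<And>b c. b \<in> B \<Longrightarrow> c \<in> C \<Longrightarrow> f1 b = g1 c \<Longrightarrow> \<exists>a\<in>A. pB a = b \<and> pC a = c"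
    using assms(5) unfolding is_pullback_def by (auto, metis)
  have inj: "inj_on (PPmap mk A pB) (PPa mk A)"
    using inj_on_PPmap[OF enc(1,2) maps(1) pullback_inj_on_fst_proj[OF assms(5,6)]] .
  show ?thesis
    unfolding is_pullback_def
  proof (intro conjI ballI impI)
    fix b c assume "b \<in> PPa mk B" "c \<in> PPa mk C" "PPmap mk B f1 b = PPmap mk C g1 c"
    then obtain x where "x \<in> PPa mk A" "PPmap mk A pB x = b" "PPmap mk A pC x = c"
      using PPmap_weak_pullback[OF enc maps(1,3,4) mediate] by blast
    then show "\<exists>!a. a \<in> PPa mk A \<and> PPmap mk A pB a = b \<and> PPmap mk A pC a = c"
      using inj by (metis inj_onD)
  qed (use PPmap_into_PPa[OF enc(1) maps(1)] PPmap_into_PPa[OF enc(1) maps(2)]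
      PPmap_into_PPa[OF enc(2) maps(3)] PPmap_into_PPa[OF enc(3) maps(4)]
      PPmap_commutes[where f = f1 and g = g1, OF enc(1-3) maps(1,2) comm] in blast)+
qed

end
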